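(* Let $\Omega\subset\mathbb{R}^2$ have properties (i) and $( ** )$. Then for every $\omega^\diamond=(p,q)\in\Omega^\diamond$, the line $L(\omega^\diamond)=\{(x,y)\in\mathbb{R}^2:px-qy=1\}$ is not parallel to either of the boundary rays $l_0,l_1$ of the cone $C=\operatorname{cl}(\mathbb{R}_+\Omega)$. This holds also when the rays $l_0$ and $l_1$ coincide (i.e. when $\dim\Omega=1$).
   Context: $\mathbb{R}_+=[0,\infty)$; points of $\mathbb{R}^{2*}$ are $(p,q)$. Property (i): $\Omega$ nonempty, convex, closed, $0\notin\Omega$, $\lambda\Omega\subset\Omega$ for $\lambda>1$. Property $( ** )$: $\partial C=l_0\cup l_1$ where $l_0,l_1$ are the (possibly coinciding) boundary rays from the origin of the closed cone $C=\operatorname{cl}(\mathbb{R}_+\Omega)$, and $\operatorname{dist}(l_0,\Omega)=\operatorname{dist}(l_1,\Omega)=0$. Antipolar: $\Omega^\diamond=\{(p,q):px-qy\ge1\ \forall(x,y)\in\Omega\}$. *)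

theory Defs
  imports "HOL-Analysis.Analysis"
begin

definition prop_i :: "(real \<times> real) set \<Rightarrow> bool" where
  "prop_i \<Omega> \<longleftrightarrow> \<Omega> \<noteq> {} \<and> convex \<Omega> \<and> closed \<Omega> \<and> (0::real\<times>real) \<notin> \<Omega> \<and>
     (\<forall>c::real. c > 1 \<longrightarrow> ((\<lambda>x. c *\<^sub>R x) ` \<Omega>) \<subseteq> \<Omega>)"

definition cone_of :: "(real \<times> real) set \<Rightarrow> (real \<times> real) set" where
  "cone_of \<Omega> = closure {t *\<^sub>R w | t w. t \<ge> 0 \<and> w \<in> \<Omega>}"

definition ray :: "real \<times> real \<Rightarrow> (real \<times> real) set" where
  "ray v = {t *\<^sub>R v | t. t \<ge> 0}"

definition antipolar :: "(real \<times> real) set \<Rightarrow> (real \<times> real) set" where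
  "antipolar \<Omega> = {(p, q). \<forall>(x, y) \<in> \<Omega>. p * x - q * y \<ge> 1}"

definition lineL :: "real \<times> real \<Rightarrow> (real \<times> real) set" where
  "lineL w = {(x, y). fst w * x - snd w * y = 1}"

definition parallel_dir :: "(real \<times> real) set \<Rightarrow> real \<times> real \<Rightarrow> bool" where
  "parallel_dir L v \<longleftrightarrow> (\<forall>z \<in> L. \<forall>t::real. z + t *\<^sub>R v \<in> L)"

end

theory Submission
  imports Defs
begin

text \<open>Write \<open>u = (p, -q)\<close>, so that \<open>p x - q y = u \<bullet> (x, y)\<close>. For \<open>(p, q) \<in> \<Omega>\<^sup>\<diamond>\<close> the
  functional \<open>u \<bullet> -\<close> is at least 1 on \<open>\<Omega>\<close>, while \<open>L(p, q)\<close> being parallel to \<open>v\<close> means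
  \<open>u \<bullet> v = 0\<close>, i.e. the functional vanishes on the whole ray through \<open>v\<close>. By Cauchy-Schwarz
  the functional is Lipschitz with constant \<open>|u|\<close>, so the ray keeps distance at least
  \<open>1 / |u|\<close> from \<open>\<Omega>\<close>, contradicting \<open>dist(l\<^sub>i, \<Omega>) = 0\<close>.\<close>

lemma lineL_eq_hyperplane: "lineL w = {z. (fst w, - snd w) \<bullet> z = 1}"
  by (auto simp: lineL_def)

lemma antipolar_iff_inner: "w \<in> antipolar \<Omega> \<longleftrightarrow> (\<forall>z\<in>\<Omega>. 1 \<le> (fst w, - snd w) \<bullet> z)"
  by (cases w) (auto simp: antipolar_def)

lemma parallel_dir_hyperplane_iff:
  assumes "u \<noteq> 0"
  shows "parallel_dir {z. u \<bullet> z = 1} v \<longleftrightarrow> u \<bullet> v = 0"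
proof
  assume par: "parallel_dir {z. u \<bullet> z = 1} v"
  define z where "z = (1 / (u \<bullet> u)) *\<^sub>R u"
  have "u \<bullet> z = 1"
    using assms by (simp add: z_def)
  moreover have "u \<bullet> (z + 1 *\<^sub>R v) = 1"
    using par \<open>u \<bullet> z = 1\<close> unfolding parallel_dir_def by blast
  ultimately show "u \<bullet> v = 0"
    by (simp add: inner_add_right)
qed (simp add: parallel_dir_def inner_add_right)

lemma setdist_ge_inverse_norm:
  fixes u :: "'a::real_inner"
  assumes "S \<noteq> {}" "T \<noteq> {}"
    and vanish: "\<And>x. x \<in> S \<Longrightarrow> u \<bullet> x = 0"
    and ge1: "\<And>y. y \<in> T \<Longrightarrow> 1 \<le> u \<bullet> y"
  shows "1 / norm u \<le> setdist S T"
proof (rule le_setdistI[OF assms(1,2)])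
  fix x y assume "x \<in> S" "y \<in> T"
  have "1 \<le> u \<bullet> (y - x)"
    using vanish[OF \<open>x \<in> S\<close>] ge1[OF \<open>y \<in> T\<close>] by (simp add: inner_diff_right)
  also have "\<dots> \<le> norm u * dist x y"
    using norm_cauchy_schwarz[of u "y - x"] by (simp add: dist_norm norm_minus_commute)
  finally have "1 \<le> norm u * dist x y" .
  moreover have "norm u > 0"
    using \<open>1 \<le> u \<bullet> (y - x)\<close> by (metis inner_zero_left not_one_le_zero zero_less_norm_iff)
  ultimately show "1 / norm u \<le> dist x y"
    by (simp add: divide_le_eq mult.commute)
qed

lemma setdist_ray_pos_if_parallel:
  assumes "\<Omega> \<noteq> {}" "w \<in> antipolar \<Omega>" "parallel_dir (lineL w) v"
  shows "setdist (ray v) \<Omega> > 0"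
proof -
  let ?u = "(fst w, - snd w)"
  have ge1: "\<And>z. z \<in> \<Omega> \<Longrightarrow> 1 \<le> ?u \<bullet> z"
    using assms(2) by (simp add: antipolar_iff_inner)
  obtain z where "z \<in> \<Omega>"
    using assms(1) by blast
  then have "?u \<noteq> 0"
    using ge1 by (metis inner_zero_left not_one_le_zero)
  then have "?u \<bullet> v = 0"
    using assms(3) by (simp add: lineL_eq_hyperplane parallel_dir_hyperplane_iff)
  then have vanish: "\<And>x. x \<in> ray v \<Longrightarrow> ?u \<bullet> x = 0"
    by (auto simp: ray_def)
  have "0 *\<^sub>R v \<in> ray v"
    unfolding ray_def by blast
  then have "ray v \<noteq> {}"
    by blast
  have "0 < 1 / norm ?u"
    using \<open>?u \<noteq> 0\<close> by simp
  also have "\<dots> \<le> setdist (ray v) \<Omega>"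
    using setdist_ge_inverse_norm[OF \<open>ray v \<noteq> {}\<close> assms(1) vanish ge1] .
  finally show ?thesis .
qed

theorem lemma6:
  fixes \<Omega> :: "(real \<times> real) set" and v0 v1 :: "real \<times> real"
  assumes "prop_i \<Omega>"
    and "v0 \<noteq> 0" and "v1 \<noteq> 0"
    and "frontier (cone_of \<Omega>) = ray v0 \<union> ray v1"
    and "setdist (ray v0) \<Omega> = 0" and "setdist (ray v1) \<Omega> = 0"
  shows "\<forall>w \<in> antipolar \<Omega>. \<not> parallel_dir (lineL w) v0 \<and> \<not> parallel_dir (lineL w) v1"
proof -
  have "\<Omega> \<noteq> {}"
    using assms(1) by (simp add: prop_i_def)
  show ?thesis
  proof (intro ballI conjI notI)
    fix w assume "w \<in> antipolar \<Omega>" "parallel_dir (lineL w) v0"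
    from setdist_ray_pos_if_parallel[OF \<open>\<Omega> \<noteq> {}\<close> this] show False
      using assms(5) by simp
  next
    fix w assume "w \<in> antipolar \<Omega>" "parallel_dir (lineL w) v1"
    from setdist_ray_pos_if_parallel[OF \<open>\<Omega> \<noteq> {}\<close> this] show False
      using assms(6) by simp
  qed
qed

end
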